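(* Let $h\colon R\to R'$ be a homomorphism of commutative rings with unit and let $M$ be an at most countable set of monic polynomials in $R[q]$. If $h$ is injective (resp. surjective), then so is the homomorphism $h_M\colon R[q]^M\to R'[q]^{h(M)}$ induced by the map $h_q\colon R[q]\to R'[q]$ obtained by applying $h$ to coefficients.
   Context: $q$ is an indeterminate. For a set $M$ of monic polynomials in $R[q]$, $M^*$ is the multiplicative set generated by $M$, directed by divisibility, and $R[q]^M=\varprojlim_{f\in M^*}R[q]/(f)$. $h(M)=\{h_q(f):f\in M\}$. *)

theory Defs
  imports "HOL-Computational_Algebra.Polynomial" "HOL-Library.Countable_Set"
begin

definition mstar :: "'a::comm_ring_1 poly set \<Rightarrow> 'a poly set" where
  "mstar M = {prod_list fs | fs. set fs \<subseteq> M}"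

definition pcoset :: "'a::comm_ring_1 poly \<Rightarrow> 'a poly \<Rightarrow> 'a poly set" where
  "pcoset f p = {p + f * r | r. True}"

text \<open>The quotient ring R[q]/(f), as the set of its residue classes.\<close>
definition pquot :: "'a::comm_ring_1 poly \<Rightarrow> 'a poly set set" where
  "pquot f = range (pcoset f)"

text \<open>The inverse limit R[q]^M = lim_{f in M*} R[q]/(f), M* directed by
  divisibility, with transition maps R[q]/(g) \<rightarrow> R[q]/(f) for f dvd g
  (a class of (g) is mapped to the class of (f) containing it).\<close>
definition invlim :: "'a::comm_ring_1 poly set \<Rightarrow> ('a poly \<Rightarrow> 'a poly set) set" where
  "invlim M = {\<xi>. (\<forall>f\<in>mstar M. \<xi> f \<in> pquot f)
              \<and> (\<forall>f\<in>mstar M. \<forall>g\<in>mstar M. f dvd g \<longrightarrow> \<xi> g \<subseteq> \<xi> f)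
              \<and> (\<forall>f. f \<notin> mstar M \<longrightarrow> \<xi> f = {})}"

text \<open>The homomorphism h_M : R[q]^M \<rightarrow> R'[q]^{h(M)} induced by the maps
  R[q]/(f) \<rightarrow> R'[q]/(h_q f), p mod f \<mapsto> h_q(p) mod h_q(f), where h_q = map_poly h.
  The component at g is the class of h_q(p) mod g for any p in the component of
  the family at any f in M* with h_q f = g (all these classes coincide).\<close>
definition hM :: "('a::comm_ring_1 \<Rightarrow> 'b::comm_ring_1) \<Rightarrow> 'a poly set
                  \<Rightarrow> ('a poly \<Rightarrow> 'a poly set) \<Rightarrow> ('b poly \<Rightarrow> 'b poly set)" where
  "hM h M \<xi> = (\<lambda>g. \<Union>{pcoset g (map_poly h p) | p f. f \<in> mstar M \<and> map_poly h f = g \<and> p \<in> \<xi> f})"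

end

theory Submission
  imports Defs
begin

(* Injectivity: under an injective h a monic f keeps its degree and stays monic, so if h_q f
   divides h_q d, then it divides h_q r for the remainder r of the pseudo-division of d by f;
   comparing degrees forces r = 0.
   Surjectivity: the countable directed set M* has a cofinal chain F_0 | F_1 | F_2 | ..., so a
   compatible family over h(M) is determined by classes c_n mod h_q F_n with
   c_(n+1) = c_n mod h_q F_n. Lifting the successive differences coefficientwise gives p_n
   with h_q p_n = c_n and p_(n+1) = p_n mod F_n, and these p_n define a compatible family
   over M mapping to the given one. *)

lemma pcoset_iff: "x \<in> pcoset f p \<longleftrightarrow> f dvd x - p"
proof
  assume "x \<in> pcoset f p"
  then obtain r where "x = p + f * r" unfolding pcoset_def by auto
  then show "f dvd x - p" by simp
next
  assume "f dvd x - p"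
  then obtain r where "x - p = f * r" by (elim dvdE)
  then have "x = p + f * r" by (simp add: algebra_simps)
  then show "x \<in> pcoset f p" unfolding pcoset_def by auto
qed

lemma pcoset_self: "p \<in> pcoset f p"
  by (simp add: pcoset_iff)

lemma pcoset_eq_iff: "pcoset f p = pcoset f q \<longleftrightarrow> f dvd p - q"
proof
  assume "pcoset f p = pcoset f q"
  then show "f dvd p - q" using pcoset_self[of p f] by (simp add: pcoset_iff)
next
  assume pq: "f dvd p - q"
  have "f dvd x - p \<longleftrightarrow> f dvd x - q" for x
  proof -
    have "x - q = (x - p) + (p - q)" and "x - p = (x - q) - (p - q)" by simp_all
    then show ?thesis using pq by (metis dvd_add dvd_diff)
  qed
  then show "pcoset f p = pcoset f q" by (auto simp: pcoset_iff)
qed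

lemma pcoset_subset: "f dvd g \<Longrightarrow> pcoset g p \<subseteq> pcoset f p"
  by (auto simp: pcoset_iff intro: dvd_trans)

lemma pquot_eq_pcoset:
  assumes "S \<in> pquot f" "p \<in> S"
  shows "S = pcoset f p"
proof -
  obtain q where "S = pcoset f q" using assms(1) unfolding pquot_def by blast
  with assms(2) have "pcoset f p = pcoset f q" by (simp add: pcoset_iff pcoset_eq_iff)
  with \<open>S = pcoset f q\<close> show ?thesis by simp
qed

lemma one_in_mstar: "1 \<in> mstar M"
  unfolding mstar_def by (auto intro: exI[of _ "[]"])

lemma mult_in_mstar:
  assumes "f \<in> mstar M" "g \<in> mstar M"
  shows "f * g \<in> mstar M"
proof -
  obtain fs gs where "f = prod_list fs" "set fs \<subseteq> M" "g = prod_list gs" "set gs \<subseteq> M"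
    using assms unfolding mstar_def by blast
  then show ?thesis unfolding mstar_def by (auto intro!: exI[of _ "fs @ gs"])
qed

lemma mstar_eq_image_lists: "mstar M = prod_list ` lists M"
  unfolding mstar_def lists_eq_set by auto

lemma countable_mstar: "countable M \<Longrightarrow> countable (mstar M)"
  by (simp add: mstar_eq_image_lists)

lemma coeff_monic_mult_top:
  fixes p q :: "'a::comm_ring_1 poly"
  assumes "lead_coeff p = 1"
  shows "coeff (p * q) (degree p + degree q) = lead_coeff q"
  using coeff_mult_degree_sum[of p q] assms by simp

lemma degree_monic_mult:
  fixes p q :: "'a::comm_ring_1 poly"
  assumes "lead_coeff p = 1" "q \<noteq> 0"
  shows "degree (p * q) = degree p + degree q"
proof -
  have "degree p + degree q \<le> degree (p * q)"
    using coeff_monic_mult_top[OF assms(1)] assms(2) by (metis le_degree leading_coeff_0_iff)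
  with degree_mult_le[of p q] show ?thesis by linarith
qed

lemma lead_coeff_monic_mult:
  fixes p q :: "'a::comm_ring_1 poly"
  assumes "lead_coeff p = 1" "q \<noteq> 0"
  shows "lead_coeff (p * q) = lead_coeff q"
  using coeff_monic_mult_top[OF assms(1)] degree_monic_mult[OF assms] by simp

lemma monic_prod_list:
  fixes fs :: "'a::comm_ring_1 poly list"
  assumes "\<forall>f\<in>set fs. lead_coeff f = 1"
  shows "lead_coeff (prod_list fs) = 1"
  using assms
proof (induction fs)
  case (Cons f fs)
  then have "prod_list fs \<noteq> 0" by auto
  with Cons show ?case by (simp add: lead_coeff_monic_mult)
qed simp

lemma monic_mstar: "\<forall>f\<in>M. lead_coeff f = 1 \<Longrightarrow> f \<in> mstar M \<Longrightarrow> lead_coeff f = 1"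
  unfolding mstar_def by (auto intro!: monic_prod_list)

lemma degree_le_if_monic_dvd:
  fixes f r :: "'a::comm_ring_1 poly"
  assumes "lead_coeff f = 1" "f dvd r" "r \<noteq> 0"
  shows "degree f \<le> degree r"
proof -
  obtain t where "r = f * t" using assms(2) by (elim dvdE)
  with assms(3) have "t \<noteq> 0" by auto
  then have "degree r = degree f + degree t"
    using \<open>r = f * t\<close> degree_monic_mult[OF assms(1)] by simp
  then show ?thesis by simp
qed

lemma countable_dvd_cofinal_chain:
  fixes S :: "'a::comm_monoid_mult set"
  assumes "countable S" "S \<noteq> {}"
    and mult_closed: "\<And>x y. x \<in> S \<Longrightarrow> y \<in> S \<Longrightarrow> x * y \<in> S"
  obtains F :: "nat \<Rightarrow> 'a"
  where "\<And>n. F n \<in> S" "\<And>n m. n \<le> m \<Longrightarrow> F n dvd F m" "\<And>x. x \<in> S \<Longrightarrow> \<exists>n. x dvd F n"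
proof -
  define e where "e = from_nat_into S"
  have e_in: "e n \<in> S" for n unfolding e_def using from_nat_into[OF assms(2)] .
  show thesis
  proof (rule that[of "\<lambda>n. \<Prod>i\<le>n. e i"])
    show "(\<Prod>i\<le>n. e i) \<in> S" for n
      by (induction n) (simp_all add: e_in mult_closed)
    show "(\<Prod>i\<le>n. e i) dvd (\<Prod>i\<le>m. e i)" if "n \<le> m" for n m
      using that by (intro prod_dvd_prod_subset) auto
    show "\<exists>n. x dvd (\<Prod>i\<le>n. e i)" if "x \<in> S" for x
    proof
      have "x = e (to_nat_on S x)" unfolding e_def using assms(1) that by simp
      then show "x dvd (\<Prod>i\<le>to_nat_on S x. e i)"
        using prod_dvd_prod_subset[of "{..to_nat_on S x}" "{to_nat_on S x}" e] by simp
    qed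
  qed
qed

lemma invlim_in_pquot: "\<xi> \<in> invlim M \<Longrightarrow> f \<in> mstar M \<Longrightarrow> \<xi> f \<in> pquot f"
  by (simp add: invlim_def)

lemma invlim_antimono:
  "\<xi> \<in> invlim M \<Longrightarrow> f \<in> mstar M \<Longrightarrow> g \<in> mstar M \<Longrightarrow> f dvd g \<Longrightarrow> \<xi> g \<subseteq> \<xi> f"
  by (simp add: invlim_def)

lemma invlim_outside: "\<xi> \<in> invlim M \<Longrightarrow> f \<notin> mstar M \<Longrightarrow> \<xi> f = {}"
  by (simp add: invlim_def)

lemma invlim_eq_pcoset: "\<xi> \<in> invlim M \<Longrightarrow> f \<in> mstar M \<Longrightarrow> p \<in> \<xi> f \<Longrightarrow> \<xi> f = pcoset f p"
  by (rule pquot_eq_pcoset) (rule invlim_in_pquot)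

lemma invlim_obtain_pcoset:
  assumes "\<xi> \<in> invlim M" "f \<in> mstar M"
  obtains p where "\<xi> f = pcoset f p"
  using invlim_in_pquot[OF assms] unfolding pquot_def by auto

lemma invlim_common_representative:
  assumes \<xi>: "\<xi> \<in> invlim M" and "f \<in> mstar M" "g \<in> mstar M"
  obtains r where "\<xi> f = pcoset f r" "\<xi> g = pcoset g r"
proof -
  have fg: "f * g \<in> mstar M" using assms mult_in_mstar by blast
  obtain r where "\<xi> (f * g) = pcoset (f * g) r" using invlim_obtain_pcoset[OF \<xi> fg] .
  then have "r \<in> \<xi> (f * g)" using pcoset_self by metis
  then have "r \<in> \<xi> f" "r \<in> \<xi> g"
    using invlim_antimono[OF \<xi> assms(2) fg] invlim_antimono[OF \<xi> assms(3) fg] by auto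
  then show thesis using that invlim_eq_pcoset[OF \<xi>] assms by blast
qed

lemma invlim_of_chain:
  assumes mono: "\<And>n m. n \<le> m \<Longrightarrow> F n dvd F m"
    and cofinal: "\<And>f. f \<in> mstar M \<Longrightarrow> \<exists>n. f dvd F n"
    and compatible: "\<And>n. F n dvd p (Suc n) - p n"
  obtains \<xi>
  where "\<xi> \<in> invlim M" "\<And>f n. f \<in> mstar M \<Longrightarrow> f dvd F n \<Longrightarrow> \<xi> f = pcoset f (p n)"
proof
  have chain_dvd: "F n dvd p m - p n" if "n \<le> m" for n m
    using that
  proof (induction m rule: dec_induct)
    case (step m)
    have "F n dvd p (Suc m) - p m" using compatible mono[OF step(1)] dvd_trans by blast
    then have "F n dvd (p (Suc m) - p m) + (p m - p n)" using step(3) by (rule dvd_add)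
    then show ?case by simp
  qed simp
  have pcoset_indep: "pcoset f (p m) = pcoset f (p n)" if "f dvd F n" "f dvd F m" for f n m
  proof (cases "n \<le> m")
    case True
    then have "f dvd p m - p n" using that(1) chain_dvd dvd_trans by blast
    then show ?thesis by (simp add: pcoset_eq_iff)
  next
    case False
    then have "f dvd p n - p m" using that(2) chain_dvd[of m n] dvd_trans by simp
    then have "pcoset f (p n) = pcoset f (p m)" by (simp add: pcoset_eq_iff)
    then show ?thesis by simp
  qed
  define \<xi> where "\<xi> f = (if f \<in> mstar M then pcoset f (p (SOME n. f dvd F n)) else {})" for f
  show \<xi>_eq: "\<xi> f = pcoset f (p n)" if "f \<in> mstar M" "f dvd F n" for f n
  proof -
    have "f dvd F (SOME k. f dvd F k)" using someI_ex[OF cofinal[OF that(1)]] .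
    then have "pcoset f (p (SOME k. f dvd F k)) = pcoset f (p n)"
      using pcoset_indep[OF that(2)] by blast
    then show ?thesis using that(1) unfolding \<xi>_def by simp
  qed
  show "\<xi> \<in> invlim M"
    unfolding invlim_def
  proof (intro CollectI conjI ballI allI impI)
    fix f assume "f \<in> mstar M"
    with cofinal \<xi>_eq show "\<xi> f \<in> pquot f" unfolding pquot_def by blast
  next
    fix f g assume fg: "f \<in> mstar M" "g \<in> mstar M" "f dvd g"
    obtain n where "g dvd F n" using cofinal fg(2) by blast
    then have "\<xi> g = pcoset g (p n)" "\<xi> f = pcoset f (p n)"
      using \<xi>_eq fg dvd_trans by blast+
    then show "\<xi> g \<subseteq> \<xi> f" using pcoset_subset[OF fg(3)] by simp
  qed (simp add: \<xi>_def)
qed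

lemma invlim_chain_representatives:
  assumes \<eta>: "\<eta> \<in> invlim N" and G_in: "\<And>n. G n \<in> mstar N"
  obtains c where "\<And>g n. g \<in> mstar N \<Longrightarrow> g dvd G n \<Longrightarrow> \<eta> g = pcoset g (c n)"
proof -
  have "\<forall>n. \<exists>q. \<eta> (G n) = pcoset (G n) q"
    using invlim_obtain_pcoset[OF \<eta> G_in] by meson
  then obtain c where c: "\<And>n. \<eta> (G n) = pcoset (G n) (c n)" by metis
  have "\<eta> g = pcoset g (c n)" if "g \<in> mstar N" "g dvd G n" for g n
  proof -
    have "c n \<in> \<eta> g"
      using invlim_antimono[OF \<eta> that(1) G_in that(2)] c pcoset_self by blast
    then show ?thesis using invlim_eq_pcoset[OF \<eta> that(1)] by blast
  qed
  then show thesis by (rule that)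
qed

locale comm_ring_hom =
  fixes h :: "'a::comm_ring_1 \<Rightarrow> 'b::comm_ring_1"
  assumes hom_one: "h 1 = 1"
    and hom_add: "\<And>x y. h (x + y) = h x + h y"
    and hom_mult: "\<And>x y. h (x * y) = h x * h y"
begin

abbreviation hq :: "'a poly \<Rightarrow> 'b poly" where "hq \<equiv> map_poly h"

lemma hom_zero [simp]: "h 0 = 0"
  using hom_add[of 0 0] by simp

lemma hom_diff: "h (x - y) = h x - h y"
  using hom_add[of "x - y" y] by (simp add: algebra_simps)

lemma hom_sum: "h (sum f A) = (\<Sum>a\<in>A. h (f a))"
  by (induction A rule: infinite_finite_induct) (simp_all add: hom_add)

lemma coeff_hq [simp]: "coeff (hq p) n = h (coeff p n)"
  by (simp add: coeff_map_poly)

lemma hq_add: "hq (p + q) = hq p + hq q"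
  by (rule poly_eqI) (simp add: hom_add)

lemma hq_diff: "hq (p - q) = hq p - hq q"
  by (rule poly_eqI) (simp add: hom_diff)

lemma hq_mult: "hq (p * q) = hq p * hq q"
  by (rule poly_eqI) (simp add: coeff_mult hom_sum hom_mult)

lemma hq_prod_list: "hq (prod_list fs) = prod_list (map hq fs)"
  by (induction fs) (simp_all add: hom_one hq_mult)

lemma hq_dvd: "f dvd g \<Longrightarrow> hq f dvd hq g"
  by (auto simp: hq_mult)

lemma hq_pcoset_cong: "pcoset f p = pcoset f q \<Longrightarrow> pcoset (hq f) (hq p) = pcoset (hq f) (hq q)"
  by (simp add: pcoset_eq_iff flip: hq_diff) (rule hq_dvd)

lemma mstar_image_hq: "mstar (hq ` M) = hq ` mstar M"
  by (simp add: mstar_eq_image_lists lists_image image_image hq_prod_list)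

lemma hM_outside: "g \<notin> hq ` mstar M \<Longrightarrow> hM h M \<xi> g = {}"
  unfolding hM_def by blast

lemma hM_eq_pcoset:
  assumes \<xi>: "\<xi> \<in> invlim M" and f: "f \<in> mstar M" and "\<xi> f = pcoset f p"
  shows "hM h M \<xi> (hq f) = pcoset (hq f) (hq p)"
proof -
  have same: "pcoset (hq f) (hq p') = pcoset (hq f) (hq p)"
    if f': "f' \<in> mstar M" "hq f' = hq f" "p' \<in> \<xi> f'" for f' p'
  proof -
    obtain r where r: "\<xi> f = pcoset f r" "\<xi> f' = pcoset f' r"
      using invlim_common_representative[OF \<xi> f f'(1)] .
    have "pcoset (hq f) (hq p) = pcoset (hq f) (hq r)"
      using r(1) assms(3) by (intro hq_pcoset_cong) simp
    moreover have "pcoset (hq f) (hq p') = pcoset (hq f) (hq r)"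
      using r(2) f' invlim_eq_pcoset[OF \<xi>] hq_pcoset_cong by metis
    ultimately show ?thesis by simp
  qed
  have "p \<in> \<xi> f" using assms(3) pcoset_self by metis
  let ?classes = "{pcoset (hq f) (hq p') |p' f'. f' \<in> mstar M \<and> hq f' = hq f \<and> p' \<in> \<xi> f'}"
  have "hM h M \<xi> (hq f) = \<Union>?classes" by (simp add: hM_def)
  also have "\<dots> = pcoset (hq f) (hq p)"
  proof
    show "\<Union>?classes \<subseteq> pcoset (hq f) (hq p)" by (rule Union_least) (use same in blast)
    show "pcoset (hq f) (hq p) \<subseteq> \<Union>?classes" by (rule Union_upper) (use f \<open>p \<in> \<xi> f\<close> in blast)
  qed
  finally show ?thesis .
qed

lemma hM_in_invlim:
  assumes \<xi>: "\<xi> \<in> invlim M"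
  shows "hM h M \<xi> \<in> invlim (hq ` M)"
  unfolding invlim_def mstar_image_hq
proof (intro CollectI conjI ballI allI impI)
  fix g assume "g \<in> hq ` mstar M"
  then obtain f where f: "f \<in> mstar M" "g = hq f" by blast
  with \<xi> obtain p where "\<xi> f = pcoset f p" by (metis invlim_obtain_pcoset)
  then show "hM h M \<xi> g \<in> pquot g" using hM_eq_pcoset[OF \<xi> f(1)] f(2) unfolding pquot_def by simp
next
  fix g1 g2 assume "g1 \<in> hq ` mstar M" "g2 \<in> hq ` mstar M" "g1 dvd g2"
  then obtain f1 f2 where f: "f1 \<in> mstar M" "g1 = hq f1" "f2 \<in> mstar M" "g2 = hq f2" by blast
  obtain r where "\<xi> f1 = pcoset f1 r" "\<xi> f2 = pcoset f2 r"
    using invlim_common_representative[OF \<xi> f(1,3)] .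
  then show "hM h M \<xi> g2 \<subseteq> hM h M \<xi> g1"
    using hM_eq_pcoset[OF \<xi>] f pcoset_subset[OF \<open>g1 dvd g2\<close>] by simp
qed (rule hM_outside)

lemma dvd_of_hq_dvd:
  assumes "inj h" and monic: "lead_coeff f = 1" and "hq f dvd hq d"
  shows "f dvd d"
proof -
  have nonzero: "x \<noteq> 0 \<Longrightarrow> h x \<noteq> 0" for x using \<open>inj h\<close> hom_zero by (metis injD)
  have degree_hq: "degree (hq p) = degree p" for p by (rule degree_map_poly) (rule nonzero)
  have "f \<noteq> 0" using monic by auto
  obtain q r where qr: "pseudo_divmod d f = (q, r)" by fastforce
  have d: "d = f * q + r" using pseudo_divmod(1)[OF \<open>f \<noteq> 0\<close> qr] monic by simp
  have "hq r = hq d - hq f * hq q" using d by (simp add: hq_add hq_mult)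
  then have dvd_r: "hq f dvd hq r" using \<open>hq f dvd hq d\<close> by simp
  have monic_hq: "lead_coeff (hq f) = 1" using monic degree_hq[of f] by (simp add: hom_one)
  have "degree f \<le> degree r" if "r \<noteq> 0"
  proof -
    have "coeff (hq r) (degree r) \<noteq> 0" using that nonzero by simp
    then have "hq r \<noteq> 0" by (metis coeff_0)
    with degree_le_if_monic_dvd[OF monic_hq dvd_r] show ?thesis by (simp add: degree_hq)
  qed
  then have "r = 0" using pseudo_divmod(2)[OF \<open>f \<noteq> 0\<close> qr] by linarith
  then show ?thesis using d by simp
qed

lemma inj_on_hM:
  assumes "inj h" and monic: "\<forall>f\<in>M. lead_coeff f = 1"
  shows "inj_on (hM h M) (invlim M)"
proof (rule inj_onI, rule ext)
  fix \<xi> \<xi>' f assume \<xi>: "\<xi> \<in> invlim M" "\<xi>' \<in> invlim M" and eq: "hM h M \<xi> = hM h M \<xi>'"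
  show "\<xi> f = \<xi>' f"
  proof (cases "f \<in> mstar M")
    case True
    obtain p p' where p: "\<xi> f = pcoset f p" "\<xi>' f = pcoset f p'"
      using invlim_obtain_pcoset[OF \<xi>(1) True] invlim_obtain_pcoset[OF \<xi>(2) True] by metis
    have "pcoset (hq f) (hq p) = pcoset (hq f) (hq p')"
      using hM_eq_pcoset[OF \<xi>(1) True p(1)] hM_eq_pcoset[OF \<xi>(2) True p(2)] eq by simp
    then have "hq f dvd hq (p - p')" by (simp add: pcoset_eq_iff hq_diff)
    then have "f dvd p - p'" using dvd_of_hq_dvd[OF \<open>inj h\<close> monic_mstar[OF monic True]] by blast
    then show ?thesis using p by (simp add: pcoset_eq_iff)
  next
    case False
    then show ?thesis using invlim_outside \<xi> by metis
  qed
qed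

lemma surj_hq:
  assumes "surj h"
  shows "surj hq"
proof -
  \<comment> \<open>forcing \<open>g 0 = 0\<close> makes \<open>map_poly g\<close> act coefficientwise\<close>
  define g where "g x = (if x = 0 then 0 else inv h x)" for x
  have "h (g x) = x" for x
    unfolding g_def using surj_f_inv_f[OF assms] by simp
  then have "hq (map_poly g t) = t" for t
    by (intro poly_eqI) (simp add: coeff_map_poly g_def)
  then show ?thesis by (metis surjI)
qed

lemma lift_compatible_sequence:
  assumes "surj h" and compatible: "\<And>n. hq (F n) dvd c (Suc n) - c n"
  obtains p where "\<And>n. hq (p n) = c n" "\<And>n. F n dvd p (Suc n) - p n"
proof -
  have "\<exists>p. \<forall>n. hq (p n) = c n \<and> F n dvd p (Suc n) - p n"
  proof (rule dependent_nat_choice)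
    show "\<exists>x. hq x = c 0" using surj_hq[OF \<open>surj h\<close>] by (metis surjD)
  next
    fix x n assume x: "hq x = c n"
    obtain t where t: "c (Suc n) - c n = hq (F n) * t" using compatible[of n] by (elim dvdE)
    obtain s where "hq s = t" using surj_hq[OF \<open>surj h\<close>] by (metis surjD)
    then have "hq (x + F n * s) = c (Suc n)" using x t by (simp add: hq_add hq_mult algebra_simps)
    then show "\<exists>y. hq y = c (Suc n) \<and> F n dvd y - x" by (intro exI[of _ "x + F n * s"]) simp
  qed
  then show thesis using that by blast
qed

lemma invlim_in_image_hM:
  assumes "surj h" and "countable M" and \<eta>: "\<eta> \<in> invlim (hq ` M)"
  shows "\<eta> \<in> hM h M ` invlim M"
proof -
  have "mstar M \<noteq> {}" using one_in_mstar by blast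
  obtain F :: "nat \<Rightarrow> 'a poly" where F_in: "\<And>n. F n \<in> mstar M"
    and mono: "\<And>n m. n \<le> m \<Longrightarrow> F n dvd F m"
    and cofinal: "\<And>f. f \<in> mstar M \<Longrightarrow> \<exists>n. f dvd F n"
    using countable_dvd_cofinal_chain[OF countable_mstar[OF \<open>countable M\<close>]
        \<open>mstar M \<noteq> {}\<close> mult_in_mstar]
    by blast
  have G_in: "hq (F n) \<in> mstar (hq ` M)" for n using F_in mstar_image_hq by blast
  obtain c where \<eta>_eq: "\<And>g n. g \<in> mstar (hq ` M) \<Longrightarrow> g dvd hq (F n) \<Longrightarrow> \<eta> g = pcoset g (c n)"
    using invlim_chain_representatives[of \<eta> _ "\<lambda>n. hq (F n)", OF \<eta> G_in] by blast
  have "pcoset (hq (F n)) (c (Suc n)) = pcoset (hq (F n)) (c n)" for n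
    using \<eta>_eq[OF G_in hq_dvd[OF mono[of n "Suc n"]]] \<eta>_eq[OF G_in dvd_refl] by simp
  then have "hq (F n) dvd c (Suc n) - c n" for n by (simp add: pcoset_eq_iff)
  then obtain p where p: "\<And>n. hq (p n) = c n" "\<And>n. F n dvd p (Suc n) - p n"
    using lift_compatible_sequence[OF \<open>surj h\<close>] by blast
  then obtain \<xi> where \<xi>: "\<xi> \<in> invlim M"
    "\<And>f n. f \<in> mstar M \<Longrightarrow> f dvd F n \<Longrightarrow> \<xi> f = pcoset f (p n)"
    using invlim_of_chain[OF mono cofinal] by blast
  have "hM h M \<xi> = \<eta>"
  proof
    fix g
    show "hM h M \<xi> g = \<eta> g"
    proof (cases "g \<in> hq ` mstar M")
      case True
      then obtain f n where f: "f \<in> mstar M" "g = hq f" "f dvd F n" using cofinal by blast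
      then have "hM h M \<xi> g = pcoset g (c n)" using hM_eq_pcoset[OF \<xi>(1)] \<xi>(2) p(1) by simp
      also have "\<dots> = \<eta> g"
        using \<eta>_eq[of g n] True hq_dvd[OF f(3)] f(2) mstar_image_hq by simp
      finally show ?thesis .
    next
      case False
      then show ?thesis using hM_outside invlim_outside[OF \<eta>] mstar_image_hq by simp
    qed
  qed
  with \<xi>(1) show ?thesis by blast
qed

end

theorem lemma3p1:
  fixes h :: "'a::comm_ring_1 \<Rightarrow> 'b::comm_ring_1"
    and M :: "'a poly set"
  assumes hom_one: "h 1 = 1"
    and hom_add: "\<And>x y. h (x + y) = h x + h y"
    and hom_mult: "\<And>x y. h (x * y) = h x * h y"
    and monic: "\<forall>f\<in>M. lead_coeff f = 1"
    and cnt: "countable M"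
  shows "(inj h \<longrightarrow> inj_on (hM h M) (invlim M))
       \<and> (surj h \<longrightarrow> hM h M ` invlim M = invlim (map_poly h ` M))"
proof -
  interpret comm_ring_hom h using hom_one hom_add hom_mult by unfold_locales
  show ?thesis
  proof (intro conjI impI)
    show "inj_on (hM h M) (invlim M)" if "inj h" using inj_on_hM[OF that monic] .
  next
    assume "surj h"
    show "hM h M ` invlim M = invlim (map_poly h ` M)"
    proof
      show "hM h M ` invlim M \<subseteq> invlim (hq ` M)" using hM_in_invlim by (rule image_subsetI)
      show "invlim (hq ` M) \<subseteq> hM h M ` invlim M"
        using invlim_in_image_hM[OF \<open>surj h\<close> cnt] by (rule subsetI)
    qed
  qed
qed

end
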